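(* Let $S\subseteq(0,1)$ be open, $f:S\to(0,1)$ differentiable, and consider a (possibly randomized) Bernoulli factory for $f$ that is fast. For $n\in\mathbb N$ let $\varphi_{n,1}(p)=\Pr[N=n,\ Y=1]$ when the inputs have parameter $p$. Then each $\varphi_{n,1}$ is differentiable on $S$ and the series $\sum_{n=1}^\infty \partial\varphi_{n,1}(p)/\partial p$ converges uniformly on every closed interval $[\zeta,\eta]\subseteq S$.
   Context: Let $X=(X_i)$ be i.i.d. Bernoulli with parameter $p\in S$ and $U=(U_i)$ i.i.d. uniform on $(0,1)$, independent of $X$. A (possibly randomized) Bernoulli factory for $f$ consists of measurable stopping functions $\tau_i(x_1,u_1;\dots;x_i,u_i)\in\{0,1\}$ and measurable output functions $\gamma_n(x_1,u_1;\dots;x_n,u_n)\in\{0,1\}$; $N=\min\{i:\tau_i(X_1,U_1;\dots;X_i,U_i)=1\}$ is assumed finite almost surely, and the output $Y=\gamma_N(X_1,U_1;\dots;X_N,U_N)$ satisfies $\Pr[Y=1]=f(p)$ for all $p\in S$. The factory is fast if for every $p\in S$ there exist $A>0$, $\beta<1$ with $\Pr[N>n]\le A\beta^n$ for all $n$. *)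

theory Defs
  imports "HOL-Probability.Probability"
begin

definition input_measure :: "real \<Rightarrow> (bool \<times> real) measure" where
  "input_measure p = measure_pmf (bernoulli_pmf p) \<Otimes>\<^sub>M uniform_measure lborel {0<..<1}"

text \<open>The whole input sequence; index i (0-based) holds the pair (X_(i+1), U_(i+1)).\<close>
definition seq_space :: "real \<Rightarrow> (nat \<Rightarrow> bool \<times> real) measure" where
  "seq_space p = (\<Pi>\<^sub>M i\<in>(UNIV::nat set). input_measure p)"

definition hist_space :: "nat \<Rightarrow> (nat \<Rightarrow> bool \<times> real) measure" where
  "hist_space n = (\<Pi>\<^sub>M i\<in>{..<n}. (count_space UNIV \<Otimes>\<^sub>M (borel :: real measure)))"

definition stops_at :: "(nat \<Rightarrow> (nat \<Rightarrow> bool \<times> real) \<Rightarrow> bool) \<Rightarrow> nat \<Rightarrow> (nat \<Rightarrow> bool \<times> real) \<Rightarrow> bool" where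
  "stops_at \<tau> n \<omega> = \<tau> n (restrict \<omega> {..<n})"

definition first_stop :: "(nat \<Rightarrow> (nat \<Rightarrow> bool \<times> real) \<Rightarrow> bool) \<Rightarrow> nat \<Rightarrow> (nat \<Rightarrow> bool \<times> real) \<Rightarrow> bool" where
  "first_stop \<tau> n \<omega> = (1 \<le> n \<and> stops_at \<tau> n \<omega> \<and> (\<forall>k\<in>{1..<n}. \<not> stops_at \<tau> k \<omega>))"

definition stop_time :: "(nat \<Rightarrow> (nat \<Rightarrow> bool \<times> real) \<Rightarrow> bool) \<Rightarrow> (nat \<Rightarrow> bool \<times> real) \<Rightarrow> nat" where
  "stop_time \<tau> \<omega> = (LEAST n. 1 \<le> n \<and> stops_at \<tau> n \<omega>)"

definition factory_output ::
  "(nat \<Rightarrow> (nat \<Rightarrow> bool \<times> real) \<Rightarrow> bool) \<Rightarrow> (nat \<Rightarrow> (nat \<Rightarrow> bool \<times> real) \<Rightarrow> bool) \<Rightarrow> (nat \<Rightarrow> bool \<times> real) \<Rightarrow> bool" where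
  "factory_output \<tau> \<gamma> \<omega> = \<gamma> (stop_time \<tau> \<omega>) (restrict \<omega> {..<stop_time \<tau> \<omega>})"

definition bernoulli_factory ::
  "real set \<Rightarrow> (real \<Rightarrow> real) \<Rightarrow> (nat \<Rightarrow> (nat \<Rightarrow> bool \<times> real) \<Rightarrow> bool) \<Rightarrow> (nat \<Rightarrow> (nat \<Rightarrow> bool \<times> real) \<Rightarrow> bool) \<Rightarrow> bool" where
  "bernoulli_factory S f \<tau> \<gamma> \<longleftrightarrow>
     (\<forall>n. \<tau> n \<in> hist_space n \<rightarrow>\<^sub>M count_space UNIV) \<and>
     (\<forall>n. \<gamma> n \<in> hist_space n \<rightarrow>\<^sub>M count_space UNIV) \<and>
     (\<forall>p\<in>S. AE \<omega> in seq_space p. \<exists>n\<ge>1. stops_at \<tau> n \<omega>) \<and>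
     (\<forall>p\<in>S. measure (seq_space p) {\<omega> \<in> space (seq_space p). factory_output \<tau> \<gamma> \<omega>} = f p)"

definition fast_factory :: "real set \<Rightarrow> (nat \<Rightarrow> (nat \<Rightarrow> bool \<times> real) \<Rightarrow> bool) \<Rightarrow> bool" where
  "fast_factory S \<tau> \<longleftrightarrow>
     (\<forall>p\<in>S. \<exists>A>0. \<exists>\<beta><1. \<forall>n::nat.
        measure (seq_space p) {\<omega> \<in> space (seq_space p). \<forall>k\<in>{1..n}. \<not> stops_at \<tau> k \<omega>} \<le> A * \<beta> ^ n)"

definition phi1 ::
  "(nat \<Rightarrow> (nat \<Rightarrow> bool \<times> real) \<Rightarrow> bool) \<Rightarrow> (nat \<Rightarrow> (nat \<Rightarrow> bool \<times> real) \<Rightarrow> bool) \<Rightarrow> nat \<Rightarrow> real \<Rightarrow> real" where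
  "phi1 \<tau> \<gamma> n p = measure (seq_space p)
     {\<omega> \<in> space (seq_space p). first_stop \<tau> n \<omega> \<and> \<gamma> n (restrict \<omega> {..<n})}"

end

theory Submission
  imports Defs
begin

text \<open>
  Relative to the p-independent measure counting the bit and integrating the uniform variable,
  the law of n input pairs has density \<open>p ^ k * (1 - p) ^ (n - k)\<close>, k the number of ones.
  Hence the probability of any event determined by the first n inputs, in particular
  \<open>phi1 \<tau> \<gamma> n\<close>, is a polynomial \<open>\<Sum> c_T p ^ |T| (1 - p) ^ (n - |T|)\<close> with coefficients
  \<open>c_T \<ge> 0\<close> that do not depend on p. Differentiating each term gives
  \<open>|phi1' q| \<le> n (1/q + 1/(1-q)) phi1(q)\<close>, and comparing the terms at q and at a nearby p gives
  \<open>phi1(q) \<le> s ^ n phi1(p)\<close> with s close to 1. Since \<open>phi1(p) \<le> Pr[N \<ge> n] \<le> A \<beta> ^ (n - 1)\<close>,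
  the derivatives are dominated near each p by \<open>C n \<rho> ^ n\<close> with \<open>\<rho> = s \<beta> < 1\<close>; a finite
  subcover of \<open>[\<zeta>, \<eta>]\<close> and the Weierstrass M-test give uniform convergence.
\<close>

lemma sets_input_measure: "sets (input_measure p) = sets (count_space UNIV \<Otimes>\<^sub>M (borel::real measure))"
  unfolding input_measure_def by (intro sets_pair_measure_cong) auto

lemma prob_space_input_measure: "prob_space (input_measure p)"
  unfolding input_measure_def
  by (intro prob_space_pair prob_space_measure_pmf prob_space_uniform_measure) auto

lemma prob_space_seq_space: "prob_space (seq_space p)"
  unfolding seq_space_def by (intro prob_space_PiM prob_space_input_measure)

lemma space_hist_space: "space (hist_space n) = {..<n} \<rightarrow>\<^sub>E UNIV"
  unfolding hist_space_def by (simp add: space_PiM space_pair_measure)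

lemma sets_PiM_input_measure: "sets (PiM {..<n} (\<lambda>_. input_measure p)) = sets (hist_space n)"
  unfolding hist_space_def by (intro sets_PiM_cong) (auto simp: sets_input_measure)

lemma measurable_restrict_seq_space:
  "(\<lambda>\<omega>. restrict \<omega> {..<n}) \<in> seq_space p \<rightarrow>\<^sub>M PiM {..<n} (\<lambda>_. input_measure p)"
  unfolding seq_space_def by (rule measurable_restrict_subset) auto

lemma measurable_restrict_hist_space: "(\<lambda>\<omega>. restrict \<omega> {..<n}) \<in> seq_space p \<rightarrow>\<^sub>M hist_space n"
  using measurable_restrict_seq_space measurable_cong_sets[OF refl sets_PiM_input_measure] by blast

lemma measure_seq_space_restrict:
  assumes "B \<in> sets (hist_space n)"
  shows "measure (seq_space p) {\<omega>\<in>space (seq_space p). restrict \<omega> {..<n} \<in> B}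
       = measure (PiM {..<n} (\<lambda>_. input_measure p)) B"
proof -
  interpret product_prob_space "\<lambda>_. input_measure p" UNIV
    by (intro product_prob_spaceI prob_space_input_measure)
  have "measure (PiM {..<n} (\<lambda>_. input_measure p)) B =
        measure (distr (seq_space p) (PiM {..<n} (\<lambda>_. input_measure p)) (\<lambda>x. restrict x {..<n})) B"
    unfolding seq_space_def by (subst distr_PiM_restrict_finite) auto
  also have "\<dots> = measure (seq_space p) ((\<lambda>x. restrict x {..<n}) -` B \<inter> space (seq_space p))"
    using assms sets_PiM_input_measure by (intro measure_distr measurable_restrict_seq_space) auto
  finally show ?thesis by (simp add: vimage_def Int_def conj_commute)
qed

definition subset_poly :: "nat \<Rightarrow> (nat set \<Rightarrow> real) \<Rightarrow> real \<Rightarrow> real" where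
  "subset_poly n c p = (\<Sum>T\<in>Pow {..<n}. c T * (p ^ card T * (1 - p) ^ (n - card T)))"

definition subset_poly_deriv :: "nat \<Rightarrow> (nat set \<Rightarrow> real) \<Rightarrow> real \<Rightarrow> real" where
  "subset_poly_deriv n c p = (\<Sum>T\<in>Pow {..<n}. c T *
     (real (card T) * p ^ (card T - 1) * (1 - p) ^ (n - card T)
      - real (n - card T) * p ^ card T * (1 - p) ^ (n - card T - 1)))"

lemma has_real_derivative_subset_poly:
  "(subset_poly n c has_real_derivative subset_poly_deriv n c p) (at p)"
  unfolding subset_poly_def subset_poly_deriv_def
  by (auto intro!: derivative_eq_intros sum.cong simp: algebra_simps)

lemma of_nat_mult_power_diff_one: "p \<noteq> 0 \<Longrightarrow> real k * (p::real) ^ (k - 1) = real k / p * p ^ k"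
  by (cases k) auto

lemma abs_deriv_bernstein_term_le:
  assumes p: "0 < p" "p < 1" and k: "k \<le> n"
  shows "\<bar>real k * p ^ (k - 1) * (1 - p) ^ (n - k) - real (n - k) * p ^ k * (1 - p) ^ (n - k - 1)\<bar>
         \<le> real n * (1/p + 1/(1-p)) * (p ^ k * (1 - p) ^ (n - k))"
proof -
  define t where "t = p ^ k * (1 - p) ^ (n - k)"
  have t: "0 \<le> t" using p by (simp add: t_def)
  have left: "real k * p ^ (k - 1) * (1 - p) ^ (n - k) = real k / p * t"
    using of_nat_mult_power_diff_one[of p k] p by (simp add: t_def)
  have right: "real (n - k) * p ^ k * (1 - p) ^ (n - k - 1) = real (n - k) / (1 - p) * t"
    using of_nat_mult_power_diff_one[of "1 - p" "n - k"] p by (simp add: t_def mult_ac)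
  have "\<bar>real k / p * t - real (n - k) / (1 - p) * t\<bar> \<le> real k / p * t + real (n - k) / (1 - p) * t"
    using p t by (intro abs_diff_le_iff[THEN iffD2]) auto
  also have "\<dots> \<le> real n / p * t + real n / (1 - p) * t"
    using p k t by (intro add_mono mult_right_mono divide_right_mono) auto
  finally show ?thesis unfolding left right by (simp add: t_def algebra_simps)
qed

lemma abs_subset_poly_deriv_le:
  assumes p: "0 < p" "p < 1" and c: "\<And>T. 0 \<le> c T"
  shows "\<bar>subset_poly_deriv n c p\<bar> \<le> real n * (1/p + 1/(1-p)) * subset_poly n c p"
proof -
  have "\<bar>subset_poly_deriv n c p\<bar> \<le> (\<Sum>T\<in>Pow {..<n}. \<bar>c T *
     (real (card T) * p ^ (card T - 1) * (1 - p) ^ (n - card T)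
      - real (n - card T) * p ^ card T * (1 - p) ^ (n - card T - 1))\<bar>)"
    unfolding subset_poly_deriv_def by (rule sum_abs)
  also have "\<dots> \<le> (\<Sum>T\<in>Pow {..<n}. c T * (real n * (1/p + 1/(1-p)) * (p ^ card T * (1 - p) ^ (n - card T))))"
  proof (rule sum_mono)
    fix T assume "T \<in> Pow {..<n}"
    then have "card T \<le> n" using card_mono[of "{..<n}" T] by auto
    then show "\<bar>c T * (real (card T) * p ^ (card T - 1) * (1 - p) ^ (n - card T)
        - real (n - card T) * p ^ card T * (1 - p) ^ (n - card T - 1))\<bar>
        \<le> c T * (real n * (1/p + 1/(1-p)) * (p ^ card T * (1 - p) ^ (n - card T)))"
      using abs_deriv_bernstein_term_le[OF p] c[of T] by (simp add: abs_mult mult_left_mono)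
  qed
  also have "\<dots> = real n * (1/p + 1/(1-p)) * subset_poly n c p"
    unfolding subset_poly_def by (simp add: sum_distrib_left algebra_simps)
  finally show ?thesis .
qed

lemma subset_poly_le_scaled:
  assumes p: "0 \<le> p" "p \<le> 1" and q: "0 \<le> q" "q \<le> 1" and c: "\<And>T. 0 \<le> c T"
    and s: "q \<le> s * p" "1 - q \<le> s * (1 - p)"
  shows "subset_poly n c q \<le> s ^ n * subset_poly n c p"
  unfolding subset_poly_def sum_distrib_left
proof (rule sum_mono)
  fix T assume "T \<in> Pow {..<n}"
  then have k: "card T \<le> n" using card_mono[of "{..<n}" T] by auto
  have "q ^ card T * (1 - q) ^ (n - card T) \<le> (s * p) ^ card T * (s * (1 - p)) ^ (n - card T)"
    using p q s by (intro mult_mono power_mono) auto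
  also have "\<dots> = s ^ n * (p ^ card T * (1 - p) ^ (n - card T))"
    using k by (simp add: power_mult_distrib mult_ac flip: power_add)
  finally show "c T * (q ^ card T * (1 - q) ^ (n - card T)) \<le> s ^ n * (c T * (p ^ card T * (1 - p) ^ (n - card T)))"
    using c[of T] by (simp add: mult_left_mono mult.left_commute)
qed

definition input_base :: "(bool \<times> real) measure" where
  "input_base = count_space UNIV \<Otimes>\<^sub>M uniform_measure lborel {0<..<1::real}"

definition bernoulli_weight :: "real \<Rightarrow> bool \<times> real \<Rightarrow> real" where
  "bernoulli_weight p xu = (if fst xu then p else 1 - p)"

lemma sets_input_base: "sets input_base = sets (count_space UNIV \<Otimes>\<^sub>M (borel::real measure))"
  unfolding input_base_def by (intro sets_pair_measure_cong) auto

lemma measurable_fst_input_base: "(\<lambda>xu. h (fst xu)) \<in> borel_measurable input_base"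
  unfolding input_base_def by (rule measurable_compose[OF measurable_fst]) simp

lemma finite_measure_input_base: "finite_measure input_base"
proof -
  interpret U: prob_space "uniform_measure lborel {0<..<1::real}"
    by (intro prob_space_uniform_measure) auto
  show ?thesis unfolding input_base_def
    by (intro finite_measure_pair_measure finite_measure_count_space) (auto intro: U.finite_measure)
qed

lemma input_measure_eq_density:
  assumes "0 \<le> p" "p \<le> 1"
  shows "input_measure p = density input_base (\<lambda>xu. ennreal (bernoulli_weight p xu))"
proof -
  interpret U: prob_space "uniform_measure lborel {0<..<1::real}"
    by (intro prob_space_uniform_measure) auto
  have "input_measure p = density (count_space UNIV) (pmf (bernoulli_pmf p))
            \<Otimes>\<^sub>M density (uniform_measure lborel {0<..<1::real}) (\<lambda>_. 1)"
    unfolding input_measure_def by (simp add: measure_pmf_eq_density density_1)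
  also have "\<dots> = density input_base (\<lambda>(x,y). ennreal (pmf (bernoulli_pmf p) x) * 1)"
    unfolding input_base_def
    by (rule pair_measure_density) (auto simp: density_1 intro: U.sigma_finite_measure)
  also have "\<dots> = density input_base (\<lambda>xu. ennreal (bernoulli_weight p xu))"
    using assms measurable_fst_input_base[of "\<lambda>x. ennreal (pmf (bernoulli_pmf p) x)"]
      measurable_fst_input_base[of "\<lambda>x. ennreal (if x then p else 1 - p)"]
    by (intro density_cong) (auto simp: bernoulli_weight_def case_prod_unfold)
  finally show ?thesis .
qed

lemma indicator_PiE_eq_prod:
  assumes "\<omega> \<in> extensional I" "finite I"
  shows "(indicator (Pi\<^sub>E I A) \<omega> :: ennreal) = (\<Prod>i\<in>I. indicator (A i) (\<omega> i))"
proof (cases "\<omega> \<in> Pi\<^sub>E I A")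
  case False
  then obtain i where "i \<in> I" "\<omega> i \<notin> A i" using assms(1) by (auto simp: PiE_iff)
  then show ?thesis using False assms(2) by (auto simp: indicator_def intro!: prod_zero)
qed (auto simp: indicator_def PiE_iff)

lemma PiM_density:
  assumes "finite I" and "sigma_finite_measure N" "sigma_finite_measure (density N g)"
    and g: "g \<in> borel_measurable N"
  shows "PiM I (\<lambda>_. density N g) = density (PiM I (\<lambda>_. N)) (\<lambda>\<omega>. \<Prod>i\<in>I. g (\<omega> i))"
proof -
  interpret D: product_sigma_finite "\<lambda>_. density N g"
    using assms unfolding product_sigma_finite_def by auto
  interpret NN: product_sigma_finite "\<lambda>_. N"
    using assms unfolding product_sigma_finite_def by auto
  show ?thesis
  proof (rule D.PiM_eqI[symmetric, OF \<open>finite I\<close>])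
    show "sets (density (PiM I (\<lambda>_. N)) (\<lambda>\<omega>. \<Prod>i\<in>I. g (\<omega> i))) = sets (PiM I (\<lambda>_. density N g))"
      by (simp cong: sets_PiM_cong)
  next
    fix A assume "\<And>i. i \<in> I \<Longrightarrow> A i \<in> sets (density N g)"
    then have A: "\<And>i. i \<in> I \<Longrightarrow> A i \<in> sets N" by simp
    have "emeasure (density (PiM I (\<lambda>_. N)) (\<lambda>\<omega>. \<Prod>i\<in>I. g (\<omega> i))) (Pi\<^sub>E I A)
        = (\<integral>\<^sup>+\<omega>. (\<Prod>i\<in>I. g (\<omega> i)) * indicator (Pi\<^sub>E I A) \<omega> \<partial>PiM I (\<lambda>_. N))"
      using A \<open>finite I\<close> g
      by (intro emeasure_density) (auto intro!: sets_PiM_I_finite borel_measurable_prod_ennreal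
           measurable_compose[OF measurable_component_singleton[where M="\<lambda>_. N"] g])
    also have "\<dots> = (\<integral>\<^sup>+\<omega>. (\<Prod>i\<in>I. g (\<omega> i) * indicator (A i) (\<omega> i)) \<partial>PiM I (\<lambda>_. N))"
    proof (intro nn_integral_cong)
      fix \<omega> assume "\<omega> \<in> space (PiM I (\<lambda>_. N))"
      then have "\<omega> \<in> extensional I" by (simp add: space_PiM PiE_def)
      then show "(\<Prod>i\<in>I. g (\<omega> i)) * indicator (Pi\<^sub>E I A) \<omega> = (\<Prod>i\<in>I. g (\<omega> i) * indicator (A i) (\<omega> i))"
        using \<open>finite I\<close> by (simp add: indicator_PiE_eq_prod prod.distrib)
    qed
    also have "\<dots> = (\<Prod>i\<in>I. \<integral>\<^sup>+x. g x * indicator (A i) x \<partial>N)"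
      using \<open>finite I\<close> A g by (intro NN.product_nn_integral_prod) auto
    also have "\<dots> = (\<Prod>i\<in>I. emeasure (density N g) (A i))"
      using A g by (intro prod.cong refl) (simp add: emeasure_density)
    finally show "emeasure (density (PiM I (\<lambda>_. N)) (\<lambda>\<omega>. \<Prod>i\<in>I. g (\<omega> i))) (Pi\<^sub>E I A)
        = (\<Prod>i\<in>I. emeasure (density N g) (A i))" .
  qed
qed

lemma PiM_input_measure_eq_density:
  assumes "0 \<le> p" "p \<le> 1"
  shows "PiM {..<n::nat} (\<lambda>_. input_measure p) =
         density (PiM {..<n} (\<lambda>_. input_base)) (\<lambda>\<omega>. ennreal (\<Prod>i<n. bernoulli_weight p (\<omega> i)))"
proof -
  have "PiM {..<n} (\<lambda>_. input_measure p)
      = density (PiM {..<n} (\<lambda>_. input_base)) (\<lambda>\<omega>. \<Prod>i<n. ennreal (bernoulli_weight p (\<omega> i)))"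
    unfolding input_measure_eq_density[OF assms]
  proof (rule PiM_density)
    show "sigma_finite_measure input_base"
      using finite_measure_input_base by (rule finite_measure.sigma_finite_measure)
    show "sigma_finite_measure (density input_base (\<lambda>xu. ennreal (bernoulli_weight p xu)))"
      using input_measure_eq_density[OF assms] prob_space_input_measure prob_space_imp_sigma_finite
      by metis
    show "(\<lambda>xu. ennreal (bernoulli_weight p xu)) \<in> borel_measurable input_base"
      using measurable_fst_input_base[of "\<lambda>x. ennreal (if x then p else 1 - p)"]
      by (simp add: bernoulli_weight_def)
  qed simp
  also have "\<dots> = density (PiM {..<n} (\<lambda>_. input_base)) (\<lambda>\<omega>. ennreal (\<Prod>i<n. bernoulli_weight p (\<omega> i)))"
    using assms by (intro arg_cong[where f="density _"] ext prod_ennreal) (auto simp: bernoulli_weight_def)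
  finally show ?thesis .
qed

lemma prod_bernoulli_weight:
  "(\<Prod>i<n. bernoulli_weight p (\<omega> i))
     = p ^ card {i\<in>{..<n}. fst (\<omega> i)} * (1 - p) ^ (n - card {i\<in>{..<n}. fst (\<omega> i)})"
proof -
  have card_compl: "card ({..<n} - {i\<in>{..<n}. fst (\<omega> i)}) = n - card {i\<in>{..<n}. fst (\<omega> i)}"
    by (subst card_Diff_subset) auto
  have "(\<Prod>i<n. bernoulli_weight p (\<omega> i))
      = (\<Prod>i\<in>{..<n} \<inter> {i. fst (\<omega> i)}. p) * (\<Prod>i\<in>{..<n} \<inter> - {i. fst (\<omega> i)}. 1 - p)"
    unfolding bernoulli_weight_def by (rule prod.If_cases) simp
  also have "{..<n} \<inter> - {i. fst (\<omega> i)} = {..<n} - {i\<in>{..<n}. fst (\<omega> i)}" by auto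
  also have "{..<n} \<inter> {i. fst (\<omega> i)} = {i\<in>{..<n}. fst (\<omega> i)}" by auto
  finally show ?thesis by (simp only: card_compl prod_constant)
qed

lemma finite_measure_PiM_input_base: "finite_measure (PiM {..<n::nat} (\<lambda>_. input_base))"
proof -
  interpret N: finite_measure input_base by (rule finite_measure_input_base)
  interpret P: product_sigma_finite "\<lambda>_. input_base"
    unfolding product_sigma_finite_def by (auto intro: N.sigma_finite_measure)
  have "emeasure (PiM {..<n} (\<lambda>_. input_base)) (space (PiM {..<n} (\<lambda>_. input_base)))
      = (\<Prod>i<n. emeasure input_base (space input_base))"
    unfolding space_PiM by (rule P.emeasure_PiM) auto
  also have "\<dots> \<noteq> \<infinity>" by (simp add: N.emeasure_finite power_eq_top_ennreal)
  finally show ?thesis by (rule finite_measureI)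
qed

lemma sets_PiM_input_base: "sets (PiM {..<n::nat} (\<lambda>_. input_base)) = sets (hist_space n)"
  unfolding hist_space_def by (intro sets_PiM_cong) (auto simp: sets_input_base)

definition bit_pattern :: "nat \<Rightarrow> nat set \<Rightarrow> (nat \<Rightarrow> bool \<times> real) set" where
  "bit_pattern n T = {\<omega>. \<forall>i<n. fst (\<omega> i) = (i \<in> T)}"

lemma Int_bit_pattern_in_sets:
  assumes "B \<in> sets (hist_space n)"
  shows "B \<inter> bit_pattern n T \<in> sets (hist_space n)"
proof -
  have "B \<inter> bit_pattern n T = B \<inter> {\<omega>\<in>space (hist_space n). \<forall>i\<in>{..<n}. fst (\<omega> i) = (i \<in> T)}"
    using sets.sets_into_space[OF assms] by (auto simp: bit_pattern_def)
  also have "\<dots> \<in> sets (hist_space n)"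
    using assms unfolding hist_space_def by measurable
  finally show ?thesis .
qed

lemma ennreal_prod_bernoulli_weight_split:
  "ennreal (\<Prod>i<n. bernoulli_weight p (\<omega> i)) * indicator B \<omega>
     = (\<Sum>T\<in>Pow {..<n}. ennreal (p ^ card T * (1 - p) ^ (n - card T)) * indicator (B \<inter> bit_pattern n T) \<omega>)"
proof -
  define T0 where "T0 = {i\<in>{..<n}. fst (\<omega> i)}"
  have "indicator (B \<inter> bit_pattern n T) \<omega> = (if T = T0 then indicator B \<omega> else (0::ennreal))"
    if "T \<in> Pow {..<n}" for T
    using that by (auto simp: bit_pattern_def T0_def indicator_def)
  then have "(\<Sum>T\<in>Pow {..<n}. ennreal (p ^ card T * (1 - p) ^ (n - card T)) * indicator (B \<inter> bit_pattern n T) \<omega>)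
      = (\<Sum>T\<in>Pow {..<n}. if T = T0 then ennreal (p ^ card T * (1 - p) ^ (n - card T)) * indicator B \<omega> else 0)"
    by (intro sum.cong) simp_all
  also have "\<dots> = ennreal (p ^ card T0 * (1 - p) ^ (n - card T0)) * indicator B \<omega>"
    by (subst sum.delta) (auto simp: T0_def)
  finally show ?thesis unfolding prod_bernoulli_weight T0_def ..
qed

lemma measure_seq_space_restrict_eq_subset_poly:
  assumes B: "B \<in> sets (hist_space n)" and p: "0 \<le> p" "p \<le> 1"
  shows "measure (seq_space p) {\<omega>\<in>space (seq_space p). restrict \<omega> {..<n} \<in> B}
       = subset_poly n (\<lambda>T. measure (PiM {..<n} (\<lambda>_. input_base)) (B \<inter> bit_pattern n T)) p"
    (is "_ = subset_poly n ?c p")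
proof -
  define \<nu> where "\<nu> = PiM {..<n} (\<lambda>_. input_base)"
  interpret \<nu>: finite_measure \<nu> unfolding \<nu>_def by (rule finite_measure_PiM_input_base)
  have sets_\<nu>: "sets \<nu> = sets (hist_space n)" unfolding \<nu>_def by (rule sets_PiM_input_base)
  define w where "w \<omega> = ennreal (\<Prod>i<n. bernoulli_weight p (\<omega> i))" for \<omega>
  have "w \<in> borel_measurable \<nu>"
    using measurable_fst_input_base[of "\<lambda>x. if x then p else 1 - p"]
    unfolding w_def \<nu>_def bernoulli_weight_def
    by (intro measurable_compose[OF borel_measurable_prod] measurable_compose[OF measurable_component_singleton]) auto
  then have "measure (PiM {..<n} (\<lambda>_. input_measure p)) B = enn2real (\<integral>\<^sup>+\<omega>. w \<omega> * indicator B \<omega> \<partial>\<nu>)"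
    unfolding PiM_input_measure_eq_density[OF p] measure_def w_def[symmetric] \<nu>_def[symmetric]
    using B sets_\<nu> by (simp add: emeasure_density)
  also have "(\<integral>\<^sup>+\<omega>. w \<omega> * indicator B \<omega> \<partial>\<nu>)
      = (\<Sum>T\<in>Pow {..<n}. \<integral>\<^sup>+\<omega>. ennreal (p ^ card T * (1 - p) ^ (n - card T)) * indicator (B \<inter> bit_pattern n T) \<omega> \<partial>\<nu>)"
    unfolding w_def ennreal_prod_bernoulli_weight_split
    using B sets_\<nu> Int_bit_pattern_in_sets by (intro nn_integral_sum) auto
  also have "\<dots> = (\<Sum>T\<in>Pow {..<n}. ennreal (p ^ card T * (1 - p) ^ (n - card T)) * emeasure \<nu> (B \<inter> bit_pattern n T))"
    using B sets_\<nu> Int_bit_pattern_in_sets by (intro sum.cong refl nn_integral_cmult_indicator) auto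
  also have "\<dots> = (\<Sum>T\<in>Pow {..<n}. ennreal (?c T * (p ^ card T * (1 - p) ^ (n - card T))))"
    using p unfolding \<nu>_def[symmetric]
    by (intro sum.cong refl) (simp add: \<nu>.emeasure_eq_measure ennreal_mult' mult.commute)
  also have "\<dots> = ennreal (subset_poly n ?c p)"
    unfolding subset_poly_def using p by (intro sum_ennreal) auto
  finally show ?thesis
    using measure_seq_space_restrict[OF B] p
    by (simp add: subset_poly_def sum_nonneg)
qed

lemma phi1_subset_poly:
  assumes bf: "bernoulli_factory S f \<tau> \<gamma>" and n: "1 \<le> n"
  obtains c where "\<And>T. 0 \<le> c T" and "\<And>p. p \<in> {0..1} \<Longrightarrow> phi1 \<tau> \<gamma> n p = subset_poly n c p"
    and "\<And>q. q \<in> {0<..<1} \<Longrightarrow> (phi1 \<tau> \<gamma> n has_real_derivative subset_poly_deriv n c q) (at q)"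
proof -
  define B where "B = {x\<in>space (hist_space n).
    \<tau> n x \<and> (\<forall>k\<in>{1..<n}. \<not> \<tau> k (restrict x {..<k})) \<and> \<gamma> n x}"
  have [measurable]: "\<tau> k \<in> hist_space k \<rightarrow>\<^sub>M count_space UNIV" "\<gamma> n \<in> hist_space n \<rightarrow>\<^sub>M count_space UNIV" for k
    using bf unfolding bernoulli_factory_def by auto
  have [measurable]: "(\<lambda>x. restrict x {..<k}) \<in> hist_space n \<rightarrow>\<^sub>M hist_space k" if "k \<in> {1..<n}" for k
    using that unfolding hist_space_def by (intro measurable_restrict_subset) auto
  have "B \<in> sets (hist_space n)"
    unfolding B_def by measurable
  define c where "c T = measure (PiM {..<n} (\<lambda>_. input_base)) (B \<inter> bit_pattern n T)" for T
  have initial_segment: "{..<n} \<inter> {..<k} = {..<k}" if "k < n" for k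
    using that by auto
  have phi1_eq: "phi1 \<tau> \<gamma> n p = subset_poly n c p" if "p \<in> {0..1}" for p
  proof -
    have "{\<omega> \<in> space (seq_space p). first_stop \<tau> n \<omega> \<and> \<gamma> n (restrict \<omega> {..<n})}
        = {\<omega>\<in>space (seq_space p). restrict \<omega> {..<n} \<in> B}"
      using n by (auto simp: first_stop_def stops_at_def B_def space_hist_space initial_segment)
    then show ?thesis
      unfolding phi1_def c_def using \<open>B \<in> sets (hist_space n)\<close> that
      by (simp add: measure_seq_space_restrict_eq_subset_poly)
  qed
  have "(phi1 \<tau> \<gamma> n has_real_derivative subset_poly_deriv n c q) (at q)" if "q \<in> {0<..<1}" for q
    using that phi1_eq
    by (intro has_field_derivative_transform_within_open[OF has_real_derivative_subset_poly, of "{0<..<1}"])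
       auto
  with phi1_eq show ?thesis by (intro that[of c]) (auto simp: c_def)
qed

lemma phi1_geometric_bound:
  assumes bf: "bernoulli_factory S f \<tau> \<gamma>" and fast: "fast_factory S \<tau>" and "p \<in> S"
  obtains A \<beta> :: real where "0 \<le> A" "0 \<le> \<beta>" "\<beta> < 1" "\<And>n. phi1 \<tau> \<gamma> (Suc n) p \<le> A * \<beta> ^ n"
proof -
  interpret prob_space "seq_space p" by (rule prob_space_seq_space)
  obtain A \<beta> :: real where A: "A > 0" and \<beta>: "\<beta> < 1"
    and tail: "\<And>n::nat. measure (seq_space p) {\<omega> \<in> space (seq_space p). \<forall>k\<in>{1..n}. \<not> stops_at \<tau> k \<omega>} \<le> A * \<beta> ^ n"
    using fast \<open>p \<in> S\<close> unfolding fast_factory_def by blast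
  have "0 \<le> A * \<beta>" using order_trans[OF measure_nonneg tail[of 1]] by simp
  with A have "0 \<le> \<beta>" by (simp add: zero_le_mult_iff)
  have [measurable]: "(\<lambda>\<omega>. stops_at \<tau> k \<omega>) \<in> seq_space p \<rightarrow>\<^sub>M count_space UNIV" for k
    using bf unfolding stops_at_def bernoulli_factory_def
    by (intro measurable_compose[OF measurable_restrict_hist_space]) auto
  have "phi1 \<tau> \<gamma> (Suc n) p \<le> A * \<beta> ^ n" for n
  proof -
    have "phi1 \<tau> \<gamma> (Suc n) p \<le> measure (seq_space p) {\<omega> \<in> space (seq_space p). \<forall>k\<in>{1..n}. \<not> stops_at \<tau> k \<omega>}"
      unfolding phi1_def by (rule finite_measure_mono) (auto simp: first_stop_def)
    then show ?thesis using tail[of n] by linarith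
  qed
  with A \<beta> \<open>0 \<le> \<beta>\<close> show ?thesis by (intro that[of A \<beta>]) auto
qed

lemma summable_Suc_mult_power: "0 \<le> (r::real) \<Longrightarrow> r < 1 \<Longrightarrow> summable (\<lambda>n. real (Suc n) * r ^ n)"
  using termdiff_converges[where K=1 and c="\<lambda>_. 1::real" and x=r]
  by (simp add: diffs_def summable_geometric)

lemma dist_lt_imp_ratio_bounds:
  fixes p q s :: real
  assumes p: "0 < p" "p < 1" and s: "1 < s" "s \<le> 2"
    and "dist q p < (s - 1) * p / 2" "dist q p < (s - 1) * (1 - p) / 2"
  shows "p / 2 \<le> q" "q \<le> s * p" "(1 - p) / 2 \<le> 1 - q" "1 - q \<le> s * (1 - p)"
proof -
  define a b where "a = (s - 1) * p" and "b = (s - 1) * (1 - p)"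
  have "0 < a" "0 < b" "a \<le> p" "b \<le> 1 - p"
    unfolding a_def b_def using s p by (auto intro: mult_pos_pos mult_left_le_one_le)
  moreover have "s * p = p + a" "s * (1 - p) = 1 - p + b"
    unfolding a_def b_def by (simp_all add: algebra_simps)
  moreover have "p - a / 2 < q" "q < p + a / 2" "p - b / 2 < q" "q < p + b / 2"
    using assms(5,6) unfolding a_def b_def dist_real_def abs_diff_less_iff by simp_all
  moreover have "(1 - p) / 2 \<le> 1 - q"
    using \<open>q < p + b / 2\<close> \<open>b \<le> 1 - p\<close> by (simp add: field_simps)
  ultimately show "p / 2 \<le> q" "q \<le> s * p" "(1 - p) / 2 \<le> 1 - q" "1 - q \<le> s * (1 - p)"
    by linarith+
qed

lemma abs_subset_poly_deriv_le_at_nearby: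
  assumes p: "0 < p" "p < 1" and c: "\<And>T. 0 \<le> c T"
    and q: "p / 2 \<le> q" "q \<le> s * p" "(1 - p) / 2 \<le> 1 - q" "1 - q \<le> s * (1 - p)"
  shows "\<bar>subset_poly_deriv n c q\<bar> \<le> real n * (2 / p + 2 / (1 - p)) * (s ^ n * subset_poly n c p)"
proof -
  have q01: "0 < q" "q < 1" using p q by auto
  have "1 / q \<le> 1 / (p / 2)" "1 / (1 - q) \<le> 1 / ((1 - p) / 2)"
    using p q by (intro divide_left_mono mult_pos_pos; simp)+
  then have weight: "1 / q + 1 / (1 - q) \<le> 2 / p + 2 / (1 - p)"
    by simp
  have "\<bar>subset_poly_deriv n c q\<bar> \<le> real n * (1 / q + 1 / (1 - q)) * subset_poly n c q"
    using q01 c by (rule abs_subset_poly_deriv_le)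
  also have "\<dots> \<le> real n * (2 / p + 2 / (1 - p)) * (s ^ n * subset_poly n c p)"
  proof (rule mult_mono)
    show "real n * (1 / q + 1 / (1 - q)) \<le> real n * (2 / p + 2 / (1 - p))"
      using weight by (rule mult_left_mono) simp
    show "subset_poly n c q \<le> s ^ n * subset_poly n c p"
      using p q01 c q(2,4) by (intro subset_poly_le_scaled) auto
    show "0 \<le> subset_poly n c q"
      unfolding subset_poly_def using c q01 by (intro sum_nonneg) auto
  qed (use p in simp)
  finally show ?thesis .
qed

lemma deriv_phi1_locally_dominated:
  assumes bf: "bernoulli_factory S f \<tau> \<gamma>" and fast: "fast_factory S \<tau>"
    and "S \<subseteq> {0<..<1}" and "p \<in> S"
  shows "\<exists>U M. open U \<and> p \<in> U \<and> summable M \<and>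
           (\<forall>n. \<forall>q\<in>U. \<bar>deriv (phi1 \<tau> \<gamma> (Suc n)) q\<bar> \<le> M n)"
proof -
  have p: "0 < p" "p < 1" using assms by auto
  obtain A \<beta> where A: "0 \<le> A" and \<beta>: "0 \<le> \<beta>" "\<beta> < 1"
    and phi1_le: "\<And>n. phi1 \<tau> \<gamma> (Suc n) p \<le> A * \<beta> ^ n"
    using phi1_geometric_bound[OF bf fast \<open>p \<in> S\<close>] by blast
  define s where "s = 2 / (1 + \<beta>)"
  have s: "1 < s" "s \<le> 2" using \<beta> by (auto simp: s_def field_simps)
  define \<rho> where "\<rho> = s * \<beta>"
  have \<rho>: "0 \<le> \<rho>" "\<rho> < 1" using \<beta> s by (auto simp: \<rho>_def s_def field_simps)
  define \<delta> where "\<delta> = min ((s - 1) * p / 2) ((s - 1) * (1 - p) / 2)"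
  define W where "W = 2 / p + 2 / (1 - p)"
  define M where "M n = A * s * W * (real (Suc n) * \<rho> ^ n)" for n
  have "\<bar>deriv (phi1 \<tau> \<gamma> (Suc n)) q\<bar> \<le> M n" if "q \<in> ball p \<delta>" for n q
  proof -
    have "dist q p < (s - 1) * p / 2" "dist q p < (s - 1) * (1 - p) / 2"
      using that by (auto simp: \<delta>_def dist_commute)
    note q = dist_lt_imp_ratio_bounds[OF p s this]
    then have "q \<in> {0<..<1}" using p by auto
    obtain c where c: "\<And>T. 0 \<le> c T"
      and phi1_eq: "\<And>x. x \<in> {0..1} \<Longrightarrow> phi1 \<tau> \<gamma> (Suc n) x = subset_poly (Suc n) c x"
      and has_deriv: "\<And>x. x \<in> {0<..<1} \<Longrightarrow>
        (phi1 \<tau> \<gamma> (Suc n) has_real_derivative subset_poly_deriv (Suc n) c x) (at x)"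
      by (rule phi1_subset_poly[OF bf, of "Suc n"]) auto
    have "\<bar>deriv (phi1 \<tau> \<gamma> (Suc n)) q\<bar> = \<bar>subset_poly_deriv (Suc n) c q\<bar>"
      using has_deriv[THEN DERIV_imp_deriv] \<open>q \<in> {0<..<1}\<close> by simp
    also have "\<dots> \<le> real (Suc n) * W * (s ^ Suc n * subset_poly (Suc n) c p)"
      unfolding W_def using p c q by (rule abs_subset_poly_deriv_le_at_nearby)
    also have "subset_poly (Suc n) c p = phi1 \<tau> \<gamma> (Suc n) p"
      using phi1_eq p by simp
    also have "real (Suc n) * W * (s ^ Suc n * phi1 \<tau> \<gamma> (Suc n) p)
        \<le> real (Suc n) * W * (s ^ Suc n * (A * \<beta> ^ n))"
      using phi1_le W_def p s by (intro mult_left_mono) auto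
    also have "\<dots> = M n"
      by (simp add: M_def \<rho>_def power_mult_distrib)
    finally show ?thesis .
  qed
  moreover have "summable M"
    unfolding M_def using \<rho> by (intro summable_mult summable_Suc_mult_power)
  moreover have "\<delta> > 0" using p s by (simp add: \<delta>_def)
  ultimately show ?thesis by (intro exI[of _ "ball p \<delta>"] exI[of _ M]) auto
qed

lemma uniformly_convergent_on_compact_if_locally_dominated:
  fixes g :: "nat \<Rightarrow> 'a::metric_space \<Rightarrow> 'b::banach"
  assumes "compact K"
    and local: "\<And>x. x \<in> K \<Longrightarrow> \<exists>U M. open U \<and> x \<in> U \<and> summable M \<and> (\<forall>n. \<forall>y\<in>U \<inter> K. norm (g n y) \<le> M n)"
  shows "uniformly_convergent_on K (\<lambda>m y. \<Sum>n<m. g n y)"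
proof -
  obtain U M where UM: "\<And>x. x \<in> K \<Longrightarrow> open (U x) \<and> x \<in> U x \<and> summable (M x) \<and>
      (\<forall>n. \<forall>y\<in>U x \<inter> K. norm (g n y) \<le> M x n)"
    using local by metis
  then have "K \<subseteq> (\<Union>x\<in>K. U x)" by blast
  then obtain T where T: "T \<subseteq> K" "finite T" "K \<subseteq> (\<Union>x\<in>T. U x)"
    using compactE_image[OF \<open>compact K\<close>, of K U] UM by blast
  show ?thesis
  proof (rule Weierstrass_m_test'[where M="\<lambda>n. \<Sum>x\<in>T. M x n"])
    fix n y assume "y \<in> K"
    then obtain x where x: "x \<in> T" "y \<in> U x" using T by blast
    have "0 \<le> M t n" if "t \<in> T" for t
      using UM[of t] T that by (meson IntI norm_ge_zero order_trans subsetD)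
    then have "M x n \<le> (\<Sum>t\<in>T. M t n)"
      using x T by (intro member_le_sum) auto
    moreover have "norm (g n y) \<le> M x n" using UM[of x] x T \<open>y \<in> K\<close> by blast
    ultimately show "norm (g n y) \<le> (\<Sum>t\<in>T. M t n)" by linarith
  next
    show "summable (\<lambda>n. \<Sum>x\<in>T. M x n)"
      using UM T by (intro summable_sum) blast
  qed
qed

theorem lemma1:
  fixes S :: "real set" and f :: "real \<Rightarrow> real"
    and \<tau> \<gamma> :: "nat \<Rightarrow> (nat \<Rightarrow> bool \<times> real) \<Rightarrow> bool"
  assumes "open S" and "S \<subseteq> {0<..<1}"
    and "\<forall>p\<in>S. f p \<in> {0<..<1}"
    and "\<forall>p\<in>S. f differentiable (at p)"
    and "bernoulli_factory S f \<tau> \<gamma>"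
    and "fast_factory S \<tau>"
  shows "(\<forall>n\<ge>1. \<forall>p\<in>S. phi1 \<tau> \<gamma> n differentiable (at p)) \<and>
         (\<forall>\<zeta> \<eta>. {\<zeta>..\<eta>} \<subseteq> S \<longrightarrow>
            uniformly_convergent_on {\<zeta>..\<eta>} (\<lambda>m p. \<Sum>n\<in>{1..m}. deriv (phi1 \<tau> \<gamma> n) p))"
proof (intro conjI allI impI ballI)
  fix n :: nat and p assume "1 \<le> n" and "p \<in> S"
  obtain c where "(phi1 \<tau> \<gamma> n has_real_derivative subset_poly_deriv n c p) (at p)"
    using phi1_subset_poly[OF assms(5) \<open>1 \<le> n\<close>] \<open>p \<in> S\<close> assms(2) by (metis subsetD)
  then show "phi1 \<tau> \<gamma> n differentiable (at p)"
    unfolding real_differentiable_def by blast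
next
  fix \<zeta> \<eta> :: real assume "{\<zeta>..\<eta>} \<subseteq> S"
  have "uniformly_convergent_on {\<zeta>..\<eta>} (\<lambda>m p. \<Sum>n<m. deriv (phi1 \<tau> \<gamma> (Suc n)) p)"
  proof (rule uniformly_convergent_on_compact_if_locally_dominated[OF compact_Icc])
    fix p assume "p \<in> {\<zeta>..\<eta>}"
    with \<open>{\<zeta>..\<eta>} \<subseteq> S\<close> deriv_phi1_locally_dominated[OF assms(5,6,2)]
    show "\<exists>U M. open U \<and> p \<in> U \<and> summable M \<and>
            (\<forall>n. \<forall>q\<in>U \<inter> {\<zeta>..\<eta>}. norm (deriv (phi1 \<tau> \<gamma> (Suc n)) q) \<le> M n)"
      by (metis IntD1 real_norm_def subsetD)
  qed
  moreover have "(\<lambda>m p. \<Sum>n<m. deriv (phi1 \<tau> \<gamma> (Suc n)) p) = (\<lambda>m p. \<Sum>n\<in>{1..m}. deriv (phi1 \<tau> \<gamma> n) p)"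
    by (intro ext) (rule sum_bounds_lt_plus1)
  ultimately show "uniformly_convergent_on {\<zeta>..\<eta>} (\<lambda>m p. \<Sum>n\<in>{1..m}. deriv (phi1 \<tau> \<gamma> n) p)"
    by simp
qed

end
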